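(* There exist a finite group $G$ of order $2^7$ (namely $\texttt{SmallGroup}(128,560)$) and a core-free elementary abelian subgroup $H$ of $G$ of order $8$ such that $d_G(H)=3$ but $b(G,H)=4$; in particular there are no $x,y\in G$ with $H\cap H^x\cap H^y=1$.
   Context: Depth: for a finite group $G$, a subgroup $H$ and $m\geqslant 1$, let $(\mathbb{C}G)^{\otimes m}=\mathbb{C}G\otimes_{\mathbb{C}H}\cdots\otimes_{\mathbb{C}H}\mathbb{C}G$ ($m$ factors). For $n\geqslant 1$, the inclusion $\mathbb{C}H\subseteq\mathbb{C}G$ has depth $2n$ if $(\mathbb{C}G)^{\otimes(n+1)}$ is isomorphic, as a $(\mathbb{C}G,\mathbb{C}H)$-bimodule, to a direct summand of $\bigoplus_{i=1}^k(\mathbb{C}G)^{\otimes n}$ for some $k\geqslant 1$; it has depth $2n+1$ if the same holds for $(\mathbb{C}H,\mathbb{C}H)$-bimodules; it has depth $1$ if $\mathbb{C}G$ is isomorphic as a $(\mathbb{C}H,\mathbb{C}H)$-bimodule to a direct summand of $\bigoplus_{i=1}^k\mathbb{C}H$ for some $k\geqslant1$. The depth $d_G(H)$ is the least positive integer $n$ such that the inclusion has depth $n$. For core-free $H$ (i.e. $\bigcap_{g\in G}H^g=1$), $b(G,H)$ is the least $b$ such that there exist $x_1,\dots,x_b\in G$ with $\bigcap_{i=1}^b H^{x_i}=1$. $\texttt{SmallGroup}(128,560)$ refers to the group with that identifier in the GAP/Magma small groups library. *)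

theory Defs
  imports Complex_Main "HOL-Algebra.Group"
begin

text \<open>A bimodule with C-basis A on which pairs (l,r) (l in L acting on the left,
 r in R acting on the right) act by permutations a l r.  Module maps between
 such permutation bimodules are matrices T with T (b l r y) (a l r x) = T y x.
 Y (basis A) is isomorphic to a direct summand of the direct sum of k copies
 of X (basis B) iff there are bimodule maps I : Y -> X^k, P : X^k -> Y with
 P o I = id (a split monomorphism).  The basis of X^k is {..<k} x B.\<close>

definition is_summand_multiple ::
  "'x set \<Rightarrow> ('l \<Rightarrow> 'r \<Rightarrow> 'x \<Rightarrow> 'x) \<Rightarrow> 'y set \<Rightarrow> ('l \<Rightarrow> 'r \<Rightarrow> 'y \<Rightarrow> 'y)
    \<Rightarrow> 'l set \<Rightarrow> 'r set \<Rightarrow> bool" where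
  "is_summand_multiple A a B b L R \<longleftrightarrow>
    (\<exists>k::nat. k \<ge> 1 \<and>
      (\<exists>(I :: nat \<times> 'y \<Rightarrow> 'x \<Rightarrow> complex) (P :: 'x \<Rightarrow> nat \<times> 'y \<Rightarrow> complex).
        (\<forall>l\<in>L. \<forall>r\<in>R. \<forall>x\<in>A. \<forall>i<k. \<forall>y\<in>B.
            I (i, b l r y) (a l r x) = I (i, y) x \<and> P (a l r x) (i, b l r y) = P x (i, y)) \<and>
        (\<forall>x\<in>A. \<forall>x'\<in>A.
            (\<Sum>c\<in>{..<k} \<times> B. P x c * I c x') = (if x = x' then 1 else 0))))"

text \<open>(CG)^{tensor m} (m factors, tensor over CH) is the permutation bimodule whose
 basis is the set of orbits of G^m under H^(m-1) acting by
 (g_1,...,g_m) -> (g_1 h_1, h_1^-1 g_2 h_2, ..., h_(m-1)^-1 g_m).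
 Lists of length m represent elements of G^m.\<close>

definition tensor_orbit :: "('a, 'b) monoid_scheme \<Rightarrow> 'a set \<Rightarrow> 'a list \<Rightarrow> 'a list set" where
  "tensor_orbit G H xs = {ys. length ys = length xs \<and>
     (\<exists>hf :: nat \<Rightarrow> 'a. (\<forall>j. j + 1 < length xs \<longrightarrow> hf j \<in> H) \<and>
        (\<forall>j<length xs.
           ys ! j = inv\<^bsub>G\<^esub> (if j = 0 then \<one>\<^bsub>G\<^esub> else hf (j - 1)) \<otimes>\<^bsub>G\<^esub> xs ! j
                    \<otimes>\<^bsub>G\<^esub> (if j + 1 = length xs then \<one>\<^bsub>G\<^esub> else hf j)))}"

definition tensor_basis :: "('a, 'b) monoid_scheme \<Rightarrow> 'a set \<Rightarrow> nat \<Rightarrow> 'a list set set" where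
  "tensor_basis G H m = tensor_orbit G H ` {xs. length xs = m \<and> set xs \<subseteq> carrier G}"

definition bimod_list_act :: "('a, 'b) monoid_scheme \<Rightarrow> 'a \<Rightarrow> 'a \<Rightarrow> 'a list \<Rightarrow> 'a list" where
  "bimod_list_act G l r xs =
     (let ys = xs[0 := l \<otimes>\<^bsub>G\<^esub> xs ! 0] in ys[length ys - 1 := ys ! (length ys - 1) \<otimes>\<^bsub>G\<^esub> r])"

definition tensor_act :: "('a, 'b) monoid_scheme \<Rightarrow> 'a \<Rightarrow> 'a \<Rightarrow> 'a list set \<Rightarrow> 'a list set" where
  "tensor_act G l r C = bimod_list_act G l r ` C"

definition has_depth :: "('a, 'b) monoid_scheme \<Rightarrow> 'a set \<Rightarrow> nat \<Rightarrow> bool" where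
  "has_depth G H d \<longleftrightarrow>
     (d = 1 \<and> is_summand_multiple (carrier G) (\<lambda>l r x. l \<otimes>\<^bsub>G\<^esub> x \<otimes>\<^bsub>G\<^esub> r)
                                   H (\<lambda>l r x. l \<otimes>\<^bsub>G\<^esub> x \<otimes>\<^bsub>G\<^esub> r) H H) \<or>
     (\<exists>n\<ge>1. d = 2 * n \<and>
        is_summand_multiple (tensor_basis G H (n + 1)) (tensor_act G)
                            (tensor_basis G H n) (tensor_act G) (carrier G) H) \<or>
     (\<exists>n\<ge>1. d = 2 * n + 1 \<and>
        is_summand_multiple (tensor_basis G H (n + 1)) (tensor_act G)
                            (tensor_basis G H n) (tensor_act G) H H)"

definition depth :: "('a, 'b) monoid_scheme \<Rightarrow> 'a set \<Rightarrow> nat" where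
  "depth G H = (LEAST d. d \<ge> 1 \<and> has_depth G H d)"

definition conj_subgroup :: "('a, 'b) monoid_scheme \<Rightarrow> 'a set \<Rightarrow> 'a \<Rightarrow> 'a set" where
  "conj_subgroup G H x = (\<lambda>h. inv\<^bsub>G\<^esub> x \<otimes>\<^bsub>G\<^esub> h \<otimes>\<^bsub>G\<^esub> x) ` H"

definition core_free :: "('a, 'b) monoid_scheme \<Rightarrow> 'a set \<Rightarrow> bool" where
  "core_free G H \<longleftrightarrow> (\<Inter>g\<in>carrier G. conj_subgroup G H g) = {\<one>\<^bsub>G\<^esub>}"

definition base_size :: "('a, 'b) monoid_scheme \<Rightarrow> 'a set \<Rightarrow> nat" where
  "base_size G H = (LEAST b. \<exists>xs. length xs = b \<and> set xs \<subseteq> carrier G \<and>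
                        (\<Inter>x\<in>set xs. conj_subgroup G H x) = {\<one>\<^bsub>G\<^esub>})"

definition elementary_abelian_2 :: "('a, 'b) monoid_scheme \<Rightarrow> 'a set \<Rightarrow> bool" where
  "elementary_abelian_2 G H \<longleftrightarrow>
     (\<forall>x\<in>H. \<forall>y\<in>H. x \<otimes>\<^bsub>G\<^esub> y = y \<otimes>\<^bsub>G\<^esub> x) \<and> (\<forall>x\<in>H. x \<otimes>\<^bsub>G\<^esub> x = \<one>\<^bsub>G\<^esub>)"

end

theory Submission
  imports Defs
begin

text \<open>
  Elements of G128 are 7-bit numbers: bits 0-2 span H8, bit 3 is a central involution z = 8 and
  bits 4-6 span a complement T; the product is xor corrected by z whenever the pairing of the
  H8-part of the left factor with the T-part of the right factor is odd.  Conjugation fixes H8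
  up to z: the conjugate of h by g is h or h z according to pairing h g.  Hence H8 meets its
  conjugates by 16, 32, 64 trivially (so b(G,H) <= 4), while three arbitrary conjugates of H8
  always share the conjugate of a nonzero h whose pairings with the three conjugating elements
  agree, and such an h exists because F_2^3 maps to F_2^2 with nontrivial kernel.

  All modules in the definition of depth are permutation bimodules, and over the elementary
  abelian group H8 x H8 they decompose into sign characters.  Every such character occurs in
  CG (it is trivial on the stabiliser of a suitable basis element), so
  CG tensor_CH CG is a summand of a multiple of CG: depth 3.  Depths 1 and 2 fail because an
  explicit signed sum of elements of H8 x H8 (resp. of K4 x H8) annihilates CH (resp. CG) but
  not CG (resp. CG tensor_CH CG).
\<close>

section \<open>Summands of permutation bimodules\<close>

lemma sum_eq_0_if_sign_reversing_involution:
  fixes g :: "'a \<Rightarrow> 'b::{idom, ring_char_0}"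
  assumes "\<And>e. e \<in> E \<Longrightarrow> \<sigma> e \<in> E" "\<And>e. e \<in> E \<Longrightarrow> \<sigma> (\<sigma> e) = e"
    and "\<And>e. e \<in> E \<Longrightarrow> g (\<sigma> e) = - g e"
  shows "(\<Sum>e\<in>E. g e) = 0"
proof -
  have "bij_betw \<sigma> E E" by (rule bij_betw_byWitness[where f' = \<sigma>]) (use assms in auto)
  then have "(\<Sum>e\<in>E. g e) = (\<Sum>e\<in>E. g (\<sigma> e))" by (simp add: sum.reindex_bij_betw)
  also have "\<dots> = - (\<Sum>e\<in>E. g e)" by (simp add: assms(3) sum_negf)
  finally show ?thesis by simp
qed

lemma sum_if_bij_eq:
  assumes "bij_betw g B B" "finite B" "y \<in> B"
  shows "(\<Sum>z\<in>B. if g z = y then F z else 0) = F (inv_into B g y)"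
proof -
  have "(\<Sum>z\<in>B. if g z = y then F z else 0) = (\<Sum>z\<in>B. if z = inv_into B g y then F z else 0)"
    using assms(1,3) by (intro sum.cong refl) (auto simp: bij_betw_inv_into_left f_inv_into_f bij_betw_def)
  also have "\<dots> = F (inv_into B g y)"
    using assms by (simp add: bij_betw_def inv_into_into)
  finally show ?thesis .
qed

text \<open>A signed sum of pairs (l, r) that annihilates the bimodule with basis B annihilates
  every summand of its multiples, so it cannot act nontrivially on the one with basis A.\<close>
lemma not_is_summand_multiple_if_annihilator:
  fixes a :: "'l \<Rightarrow> 'r \<Rightarrow> 'x \<Rightarrow> 'x" and b :: "'l \<Rightarrow> 'r \<Rightarrow> 'y \<Rightarrow> 'y"
    and f :: "'l \<times> 'r \<Rightarrow> real"
  assumes E: "finite E" "E \<subseteq> L \<times> R" and "finite B"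
    and b_bij: "\<forall>e\<in>E. bij_betw (case_prod b e) B B"
    and annihilates: "\<forall>y\<in>B. \<forall>y'\<in>B. (\<Sum>e\<in>E. if case_prod b e y = y' then f e else 0) = 0"
    and x\<^sub>0: "x\<^sub>0 \<in> A" "\<forall>e\<in>E. case_prod a e x\<^sub>0 \<in> A"
    and nonzero: "(\<Sum>e\<in>E. if case_prod a e x\<^sub>0 = x\<^sub>0 then f e else 0) \<noteq> 0"
  shows "\<not> is_summand_multiple A a B b L R"
proof
  assume "is_summand_multiple A a B b L R"
  then obtain k and I :: "nat \<times> 'y \<Rightarrow> 'x \<Rightarrow> complex" and P :: "'x \<Rightarrow> nat \<times> 'y \<Rightarrow> complex" where
    equivariant: "\<forall>l\<in>L. \<forall>r\<in>R. \<forall>x\<in>A. \<forall>i<k. \<forall>y\<in>B.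
        I (i, b l r y) (a l r x) = I (i, y) x \<and> P (a l r x) (i, b l r y) = P x (i, y)"
    and split: "\<forall>x\<in>A. \<forall>x'\<in>A. (\<Sum>c\<in>{..<k} \<times> B. P x c * I c x') = (if x = x' then 1 else 0)"
    unfolding is_summand_multiple_def by blast
  have of_real_sum_if: "(\<Sum>e\<in>E. if P e then complex_of_real (f e) else 0)
      = complex_of_real (\<Sum>e\<in>E. if P e then f e else 0)" for P
    unfolding of_real_sum by (intro sum.cong) auto
  have I_act: "I (i, y) (case_prod a e x\<^sub>0) = (\<Sum>z\<in>B. if case_prod b e z = y then I (i, z) x\<^sub>0 else 0)"
    if e: "e \<in> E" and i: "i < k" and y: "y \<in> B" for e i y
  proof -
    obtain l r where lr: "e = (l, r)" "l \<in> L" "r \<in> R" using E e by auto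
    have bij: "bij_betw (b l r) B B" using b_bij e lr(1) by auto
    define z where "z = inv_into B (b l r) y"
    have "z \<in> B" "b l r z = y"
      using bij y unfolding z_def bij_betw_def by (auto simp: inv_into_into f_inv_into_f)
    then have "I (i, y) (a l r x\<^sub>0) = I (i, z) x\<^sub>0" using equivariant lr i x\<^sub>0(1) by metis
    then show ?thesis using sum_if_bij_eq[OF bij \<open>finite B\<close> y, of "\<lambda>z. I (i, z) x\<^sub>0"] lr(1) z_def by simp
  qed
  have annihilated: "(\<Sum>e\<in>E. complex_of_real (f e) * I c (case_prod a e x\<^sub>0)) = 0" if c_mem: "c \<in> {..<k} \<times> B" for c
  proof -
    obtain i y where c: "c = (i, y)" "i < k" "y \<in> B" using c_mem by auto
    have "(\<Sum>e\<in>E. complex_of_real (f e) * I c (case_prod a e x\<^sub>0))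
        = (\<Sum>e\<in>E. \<Sum>z\<in>B. if case_prod b e z = y then complex_of_real (f e) * I (i, z) x\<^sub>0 else 0)"
      using I_act c by (auto simp: sum_distrib_left if_distrib intro!: sum.cong)
    also have "\<dots> = (\<Sum>z\<in>B. I (i, z) x\<^sub>0 * (\<Sum>e\<in>E. if case_prod b e z = y then complex_of_real (f e) else 0))"
      by (subst sum.swap) (auto simp: sum_distrib_left mult.commute intro!: sum.cong)
    also have "\<dots> = 0" using annihilates c(3) by (simp add: of_real_sum_if)
    finally show ?thesis .
  qed
  have "complex_of_real (\<Sum>e\<in>E. if case_prod a e x\<^sub>0 = x\<^sub>0 then f e else 0)
      = (\<Sum>e\<in>E. f e * (\<Sum>c\<in>{..<k} \<times> B. P x\<^sub>0 c * I c (case_prod a e x\<^sub>0)))"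
    unfolding of_real_sum_if[symmetric] using split x\<^sub>0 by (intro sum.cong) auto
  also have "\<dots> = (\<Sum>c\<in>{..<k} \<times> B. P x\<^sub>0 c * (\<Sum>e\<in>E. complex_of_real (f e) * I c (case_prod a e x\<^sub>0)))"
    by (simp add: sum_distrib_left mult.left_commute sum.swap[of _ E])
  also have "\<dots> = 0" using annihilated by simp
  finally show False using nonzero by (metis of_real_eq_0_iff)
qed

definition permutation_action ::
  "'e set \<Rightarrow> ('e \<Rightarrow> 'e \<Rightarrow> 'e) \<Rightarrow> ('e \<Rightarrow> 'x \<Rightarrow> 'x) \<Rightarrow> 'x set \<Rightarrow> bool" where
  "permutation_action E m act A \<longleftrightarrow>
     (\<forall>e\<in>E. bij_betw (act e) A A) \<and> (\<forall>e\<in>E. \<forall>f\<in>E. \<forall>x\<in>A. act (m e f) x = act e (act f x))"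

definition sign_character :: "'e set \<Rightarrow> ('e \<Rightarrow> 'e \<Rightarrow> 'e) \<Rightarrow> ('e \<Rightarrow> real) \<Rightarrow> bool" where
  "sign_character E m \<chi> \<longleftrightarrow>
     (\<forall>e\<in>E. \<chi> e * \<chi> e = 1) \<and> (\<forall>e\<in>E. \<forall>f\<in>E. \<chi> (m e f) = \<chi> e * \<chi> f)"

text \<open>The coefficient of x in the sum over f of \<chi> f times f x0: up to a scalar, the
  \<chi>-isotypic component of the basis vector x0.\<close>
definition character_orbit_sum ::
  "('e \<Rightarrow> 'x \<Rightarrow> 'x) \<Rightarrow> 'e set \<Rightarrow> ('e \<Rightarrow> real) \<Rightarrow> 'x \<Rightarrow> 'x \<Rightarrow> real" where
  "character_orbit_sum act E \<chi> x0 x = (\<Sum>f\<in>E. if act f x0 = x then \<chi> f else 0)"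

lemma character_orbit_sum_act:
  assumes act: "permutation_action E m act A" and \<chi>: "sign_character E m \<chi>"
    and m: "bij_betw (m e) E E" and "e \<in> E" "x0 \<in> A" "x \<in> A"
  shows "character_orbit_sum act E \<chi> x0 (act e x) = \<chi> e * character_orbit_sum act E \<chi> x0 x"
proof -
  let ?g = "\<lambda>f. if act f x0 = act e x then \<chi> f else 0"
  have "character_orbit_sum act E \<chi> x0 (act e x) = (\<Sum>f\<in>E. ?g (m e f))"
    unfolding character_orbit_sum_def using sum.reindex_bij_betw[OF m, of ?g] by simp
  also have "\<dots> = (\<Sum>f\<in>E. \<chi> e * (if act f x0 = x then \<chi> f else 0))"
  proof (rule sum.cong[OF refl])
    fix f assume "f \<in> E"
    then have "act (m e f) x0 = act e (act f x0)" "act f x0 \<in> A" "inj_on (act e) A"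
      "\<chi> (m e f) = \<chi> e * \<chi> f"
      using act \<chi> \<open>e \<in> E\<close> \<open>x0 \<in> A\<close>
      unfolding permutation_action_def sign_character_def bij_betw_def by auto
    then show "?g (m e f) = \<chi> e * (if act f x0 = x then \<chi> f else 0)"
      using \<open>x \<in> A\<close> by (auto dest: inj_onD)
  qed
  also have "\<dots> = \<chi> e * character_orbit_sum act E \<chi> x0 x"
    by (simp add: character_orbit_sum_def sum_distrib_left)
  finally show ?thesis .
qed

lemma character_orbit_sum_mult_act:
  assumes "permutation_action E m act A" "permutation_action E m act' B" "sign_character E m \<chi>"
    and "bij_betw (m e) E E" "e \<in> E" "x0 \<in> A" "x \<in> A" "y0 \<in> B" "y \<in> B"
  shows "character_orbit_sum act E \<chi> x0 (act e x) * character_orbit_sum act' E \<chi> y0 (act' e y)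
       = character_orbit_sum act E \<chi> x0 x * character_orbit_sum act' E \<chi> y0 y"
proof -
  let ?u = "character_orbit_sum act E \<chi> x0" and ?w = "character_orbit_sum act' E \<chi> y0"
  have "?u (act e x) * ?w (act' e y) = (\<chi> e * \<chi> e) * (?u x * ?w y)"
    using character_orbit_sum_act[OF assms(1,3-7)] character_orbit_sum_act[OF assms(2-5,8,9)]
    by (simp add: algebra_simps)
  also have "\<chi> e * \<chi> e = 1" using assms(3,5) unfolding sign_character_def by blast
  finally show ?thesis by simp
qed

lemma sum_character_orbit_sum_mult:
  "(\<Sum>c\<in>X. character_orbit_sum act E (\<chi> c) x0 x * character_orbit_sum act E (\<chi> c) x0 x')
     = (\<Sum>f\<in>E. \<Sum>f'\<in>E. if act f x0 = x \<and> act f' x0 = x' then (\<Sum>c\<in>X. \<chi> c f * \<chi> c f') else 0)"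
proof -
  have "(\<Sum>c\<in>X. character_orbit_sum act E (\<chi> c) x0 x * character_orbit_sum act E (\<chi> c) x0 x')
      = (\<Sum>c\<in>X. \<Sum>f\<in>E. \<Sum>f'\<in>E. if act f x0 = x \<and> act f' x0 = x' then \<chi> c f * \<chi> c f' else 0)"
    unfolding character_orbit_sum_def sum_product by (intro sum.cong refl) auto
  also have "\<dots> = (\<Sum>f\<in>E. \<Sum>f'\<in>E. \<Sum>c\<in>X. if act f x0 = x \<and> act f' x0 = x' then \<chi> c f * \<chi> c f' else 0)"
    by (subst sum.swap) (simp add: sum.swap[of _ X])
  also have "\<dots> = (\<Sum>f\<in>E. \<Sum>f'\<in>E. if act f x0 = x \<and> act f' x0 = x' then (\<Sum>c\<in>X. \<chi> c f * \<chi> c f') else 0)"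
    by (intro sum.cong refl) auto
  finally show ?thesis .
qed

lemma character_orbit_sums_orthogonal:
  assumes "finite A" "finite E" and act: "\<forall>e\<in>E. bij_betw (act e) A A"
    and orth: "\<forall>e\<in>E. \<forall>e'\<in>E. (\<Sum>c\<in>X. \<chi> c e * \<chi> c e') = (if e = e' then real (card X) else 0)"
    and "x \<in> A" "x' \<in> A"
  shows "(\<Sum>x0\<in>A. \<Sum>c\<in>X. character_orbit_sum act E (\<chi> c) x0 x * character_orbit_sum act E (\<chi> c) x0 x')
       = (if x = x' then real (card X * card E) else 0)"
proof -
  have "(\<Sum>f'\<in>E. if act f x0 = x \<and> act f' x0 = x' then (\<Sum>c\<in>X. \<chi> c f * \<chi> c f') else 0)
      = (if act f x0 = x \<and> act f x0 = x' then real (card X) else 0)" if "f \<in> E" for f x0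
  proof -
    have "(\<Sum>f'\<in>E. if act f x0 = x \<and> act f' x0 = x' then (\<Sum>c\<in>X. \<chi> c f * \<chi> c f') else 0)
        = (\<Sum>f'\<in>E. if f' = f then (if act f x0 = x \<and> act f x0 = x' then real (card X) else 0) else 0)"
      using orth that by (intro sum.cong refl) auto
    then show ?thesis using that \<open>finite E\<close> by simp
  qed
  then have "(\<Sum>x0\<in>A. \<Sum>c\<in>X. character_orbit_sum act E (\<chi> c) x0 x * character_orbit_sum act E (\<chi> c) x0 x')
      = (\<Sum>x0\<in>A. \<Sum>f\<in>E. if act f x0 = x \<and> act f x0 = x' then real (card X) else 0)"
    unfolding sum_character_orbit_sum_mult by (intro sum.cong refl) simp
  also have "\<dots> = (\<Sum>f\<in>E. \<Sum>x0\<in>A. if act f x0 = x then (if x = x' then real (card X) else 0) else 0)"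
    by (subst sum.swap) (intro sum.cong refl, auto)
  also have "\<dots> = (\<Sum>f\<in>E. if x = x' then real (card X) else 0)"
    using act sum_if_bij_eq[OF _ \<open>finite A\<close> \<open>x \<in> A\<close>, where F = "\<lambda>_. if x = x' then real (card X) else 0"]
    by (intro sum.cong) auto
  also have "\<dots> = (if x = x' then real (card X * card E) else 0)" by simp
  finally show ?thesis .
qed

lemma character_orbit_sum_self_ge_1:
  assumes "finite E" "\<epsilon> \<in> E" "act \<epsilon> y = y" and trivial: "\<forall>e\<in>E. act e y = y \<longrightarrow> \<chi> e = 1"
  shows "1 \<le> character_orbit_sum act E \<chi> y y"
proof -
  have "(1::real) \<le> (\<Sum>f\<in>E. if act f y = y then 1 else 0)"
    using member_le_sum[of \<epsilon> E "\<lambda>f. if act f y = y then 1 else 0 :: real"] assms(1-3) by simp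
  also have "\<dots> = character_orbit_sum act E \<chi> y y"
    unfolding character_orbit_sum_def using trivial by (intro sum.cong) auto
  finally show ?thesis .
qed

text \<open>The embedding sends x to the family of vectors u \<xi> x \<cdot> w \<xi>; the tight frame condition on u
  makes it split by the same family rescaled by the norms of the w \<xi>.\<close>
lemma is_summand_multiple_if_equivariant_frame:
  fixes a :: "'l \<Rightarrow> 'r \<Rightarrow> 'x \<Rightarrow> 'x" and b :: "'l \<Rightarrow> 'r \<Rightarrow> 'y \<Rightarrow> 'y"
    and u :: "'i \<Rightarrow> 'x \<Rightarrow> real" and w :: "'i \<Rightarrow> 'y \<Rightarrow> real"
  assumes "finite \<Xi>" "\<Xi> \<noteq> {}" "K > 0"
    and equivariant: "\<forall>\<xi>\<in>\<Xi>. \<forall>l\<in>L. \<forall>r\<in>R. \<forall>x\<in>A. \<forall>y\<in>B.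
                        u \<xi> (a l r x) * w \<xi> (b l r y) = u \<xi> x * w \<xi> y"
    and frame: "\<forall>x\<in>A. \<forall>x'\<in>A. (\<Sum>\<xi>\<in>\<Xi>. u \<xi> x * u \<xi> x') = (if x = x' then K else 0)"
    and nonzero: "\<forall>\<xi>\<in>\<Xi>. (\<Sum>y\<in>B. (w \<xi> y)\<^sup>2) > 0"
  shows "is_summand_multiple A a B b L R"
proof -
  define k where "k = card \<Xi>"
  obtain enum where enum: "bij_betw enum {..<k} \<Xi>"
    using ex_bij_betw_nat_finite[OF \<open>finite \<Xi>\<close>] unfolding k_def atLeast0LessThan by blast
  have "k \<ge> 1" using \<open>finite \<Xi>\<close> \<open>\<Xi> \<noteq> {}\<close> unfolding k_def by (simp add: Suc_le_eq card_gt_0_iff)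
  have enum_in: "enum i \<in> \<Xi>" if "i < k" for i using enum that by (auto simp: bij_betw_def)
  define norm2 where "norm2 \<xi> = (\<Sum>y\<in>B. (w \<xi> y)\<^sup>2)" for \<xi>
  define I where "I iy x = complex_of_real (u (enum (fst iy)) x * w (enum (fst iy)) (snd iy))"
    for iy :: "nat \<times> 'y" and x
  define P where "P x iy = I iy x / complex_of_real (norm2 (enum (fst iy)) * K)"
    for iy :: "nat \<times> 'y" and x
  have "(\<Sum>iy\<in>{..<k} \<times> B. P x iy * I iy x') = (if x = x' then 1 else 0)" if "x \<in> A" "x' \<in> A" for x x'
  proof -
    have "(\<Sum>y\<in>B. P x (i, y) * I (i, y) x') = complex_of_real (u (enum i) x * u (enum i) x' / K)"
      if "i < k" for i
    proof -
      have "(\<Sum>y\<in>B. P x (i, y) * I (i, y) x')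
          = complex_of_real (u (enum i) x * u (enum i) x' * norm2 (enum i) / (norm2 (enum i) * K))"
        unfolding P_def I_def norm2_def
        by (simp add: sum_divide_distrib sum_distrib_left power2_eq_square mult_ac)
      moreover have "norm2 (enum i) > 0" using nonzero enum_in[OF that] unfolding norm2_def by blast
      ultimately show ?thesis by simp
    qed
    note per_index = this
    have "(\<Sum>iy\<in>{..<k} \<times> B. P x iy * I iy x') = (\<Sum>i<k. \<Sum>y\<in>B. P x (i, y) * I (i, y) x')"
      by (simp add: sum.cartesian_product)
    also have "\<dots> = (\<Sum>i<k. complex_of_real (u (enum i) x * u (enum i) x' / K))"
      by (intro sum.cong refl, rule per_index) simp
    also have "\<dots> = complex_of_real ((\<Sum>i<k. u (enum i) x * u (enum i) x') / K)"
      by (simp only: sum_divide_distrib of_real_sum)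
    also have "(\<Sum>i<k. u (enum i) x * u (enum i) x') = (\<Sum>\<xi>\<in>\<Xi>. u \<xi> x * u \<xi> x')"
      using sum.reindex_bij_betw[OF enum, of "\<lambda>\<xi>. u \<xi> x * u \<xi> x'"] by simp
    finally show ?thesis using frame that \<open>K > 0\<close> by simp
  qed
  moreover have "I (i, b l r y) (a l r x) = I (i, y) x \<and> P (a l r x) (i, b l r y) = P x (i, y)"
    if "l \<in> L" "r \<in> R" "x \<in> A" "i < k" "y \<in> B" for l r x i y
    using equivariant enum_in[of i] that unfolding I_def P_def by auto
  ultimately show ?thesis
    unfolding is_summand_multiple_def using \<open>k \<ge> 1\<close> by blast
qed

lemma is_summand_multiple_if_characters_realised:
  fixes a :: "'l \<Rightarrow> 'r \<Rightarrow> 'x \<Rightarrow> 'x" and b :: "'l \<Rightarrow> 'r \<Rightarrow> 'y \<Rightarrow> 'y"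
    and \<chi> :: "'c \<Rightarrow> 'l \<times> 'r \<Rightarrow> real"
  assumes "finite A" "A \<noteq> {}" "finite B" "finite (L \<times> R)" "finite X" "X \<noteq> {}"
    and act_A: "permutation_action (L \<times> R) m (case_prod a) A"
    and act_B: "permutation_action (L \<times> R) m (case_prod b) B"
    and m_bij: "\<forall>e\<in>L \<times> R. bij_betw (m e) (L \<times> R) (L \<times> R)"
    and unit: "\<epsilon> \<in> L \<times> R" "\<forall>y\<in>B. case_prod b \<epsilon> y = y"
    and chars: "\<forall>c\<in>X. sign_character (L \<times> R) m (\<chi> c)"
    and orth: "\<forall>e\<in>L \<times> R. \<forall>e'\<in>L \<times> R.
                 (\<Sum>c\<in>X. \<chi> c e * \<chi> c e') = (if e = e' then real (card X) else 0)"
    and realised: "\<forall>c\<in>X. \<exists>y\<in>B. \<forall>e\<in>L \<times> R. case_prod b e y = y \<longrightarrow> \<chi> c e = 1"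
  shows "is_summand_multiple A a B b L R"
proof -
  define E where "E = L \<times> R"
  obtain y0 where y0: "\<forall>c\<in>X. y0 c \<in> B \<and> (\<forall>e\<in>E. case_prod b e (y0 c) = y0 c \<longrightarrow> \<chi> c e = 1)"
    using realised unfolding E_def by metis
  define u where "u \<xi> = character_orbit_sum (case_prod a) E (\<chi> (snd \<xi>)) (fst \<xi>)" for \<xi> :: "'x \<times> 'c"
  define w where "w \<xi> = character_orbit_sum (case_prod b) E (\<chi> (snd \<xi>)) (y0 (snd \<xi>))" for \<xi> :: "'x \<times> 'c"
  show ?thesis
  proof (rule is_summand_multiple_if_equivariant_frame[where \<Xi> = "A \<times> X" and u = u and w = w
        and K = "real (card X * card E)"])
    show "finite (A \<times> X)" "A \<times> X \<noteq> {}" using assms(1,2,5,6) by auto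
    have "card E > 0" using unit(1) \<open>finite (L \<times> R)\<close> unfolding E_def by (auto simp: card_gt_0_iff)
    then show "real (card X * card E) > 0" using assms(5,6) by (simp add: card_gt_0_iff)
    show "\<forall>\<xi>\<in>A \<times> X. \<forall>l\<in>L. \<forall>r\<in>R. \<forall>x\<in>A. \<forall>y\<in>B. u \<xi> (a l r x) * w \<xi> (b l r y) = u \<xi> x * w \<xi> y"
      using character_orbit_sum_mult_act[OF act_A[folded E_def] act_B[folded E_def]] chars y0 m_bij
      unfolding u_def w_def E_def by fastforce
    show "\<forall>x\<in>A. \<forall>x'\<in>A. (\<Sum>\<xi>\<in>A \<times> X. u \<xi> x * u \<xi> x') = (if x = x' then real (card X * card E) else 0)"
    proof (intro ballI)
      fix x x' assume "x \<in> A" "x' \<in> A"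
      have "(\<Sum>\<xi>\<in>A \<times> X. u \<xi> x * u \<xi> x') = (\<Sum>x0\<in>A. \<Sum>c\<in>X. u (x0, c) x * u (x0, c) x')"
        by (simp add: sum.cartesian_product)
      also have "\<dots> = (if x = x' then real (card X * card E) else 0)"
        using character_orbit_sums_orthogonal[of A E "case_prod a" \<chi> X x x'] act_A orth
          \<open>finite A\<close> \<open>finite (L \<times> R)\<close> \<open>x \<in> A\<close> \<open>x' \<in> A\<close>
        unfolding u_def E_def permutation_action_def by simp
      finally show "(\<Sum>\<xi>\<in>A \<times> X. u \<xi> x * u \<xi> x') = (if x = x' then real (card X * card E) else 0)" .
    qed
    show "\<forall>\<xi>\<in>A \<times> X. (\<Sum>y\<in>B. (w \<xi> y)\<^sup>2) > 0"
    proof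
      fix \<xi> assume "\<xi> \<in> A \<times> X"
      then have "y0 (snd \<xi>) \<in> B" "1 \<le> w \<xi> (y0 (snd \<xi>))"
        using y0 unit \<open>finite (L \<times> R)\<close> unfolding w_def E_def
        by (auto intro!: character_orbit_sum_self_ge_1)
      then have "0 < (w \<xi> (y0 (snd \<xi>)))\<^sup>2" by simp
      also have "\<dots> \<le> (\<Sum>y\<in>B. (w \<xi> y)\<^sup>2)"
        using \<open>y0 (snd \<xi>) \<in> B\<close> \<open>finite B\<close> by (intro member_le_sum) auto
      finally show "(\<Sum>y\<in>B. (w \<xi> y)\<^sup>2) > 0" .
    qed
  qed
qed

section \<open>The first two tensor powers\<close>

text \<open>Pairs (l, r) act on a bimodule by x \<mapsto> l x r, so they compose as in G \<times> G^op.\<close>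
definition bimod_mult :: "('a, 'b) monoid_scheme \<Rightarrow> 'a \<times> 'a \<Rightarrow> 'a \<times> 'a \<Rightarrow> 'a \<times> 'a" where
  "bimod_mult G e e' = (fst e \<otimes>\<^bsub>G\<^esub> fst e', snd e' \<otimes>\<^bsub>G\<^esub> snd e)"

definition pair_orbit :: "('a, 'b) monoid_scheme \<Rightarrow> 'a set \<Rightarrow> 'a \<Rightarrow> 'a \<Rightarrow> 'a list set" where
  "pair_orbit G H a b = (\<lambda>h. [a \<otimes>\<^bsub>G\<^esub> h, inv\<^bsub>G\<^esub> h \<otimes>\<^bsub>G\<^esub> b]) ` H"

lemma length_eq_2_iff: "length xs = 2 \<longleftrightarrow> (\<exists>a b. xs = [a, b])"
  by (auto simp: length_Suc_conv numeral_2_eq_2)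

context group
begin

lemma bimod_mult_bij:
  assumes "subgroup H G" "e \<in> H \<times> H"
  shows "bij_betw (bimod_mult G e) (H \<times> H) (H \<times> H)"
proof -
  interpret H: subgroup H G by fact
  obtain l r where e: "e = (l, r)" "l \<in> H" "r \<in> H" using assms(2) by auto
  have carrier: "l \<in> carrier G" "r \<in> carrier G" "\<And>x. x \<in> H \<Longrightarrow> x \<in> carrier G"
    using e H.subset by auto
  have "l \<otimes> (inv l \<otimes> x) = x" "inv l \<otimes> (l \<otimes> x) = x" if "x \<in> carrier G" for x
    using that carrier by (simp_all add: m_assoc[symmetric])
  moreover have "x \<otimes> r \<otimes> inv r = x" "x \<otimes> inv r \<otimes> r = x" if "x \<in> carrier G" for x
    using that carrier by (simp_all add: m_assoc)
  ultimately show ?thesis unfolding e(1)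
    by (intro bij_betw_byWitness[where f' = "bimod_mult G (inv l, inv r)"])
      (use e(2,3) carrier in \<open>auto simp: bimod_mult_def\<close>)
qed

lemma permutation_action_bimodule:
  assumes "L \<subseteq> carrier G" "R \<subseteq> carrier G"
    and closed: "\<And>l r x. l \<in> carrier G \<Longrightarrow> r \<in> carrier G \<Longrightarrow> x \<in> A \<Longrightarrow> act l r x \<in> A"
    and compose: "\<And>l l' r r' x. l \<in> carrier G \<Longrightarrow> l' \<in> carrier G \<Longrightarrow> r \<in> carrier G \<Longrightarrow>
        r' \<in> carrier G \<Longrightarrow> x \<in> A \<Longrightarrow> act (l \<otimes> l') (r' \<otimes> r) x = act l r (act l' r' x)"
    and unit: "\<And>x. x \<in> A \<Longrightarrow> act \<one> \<one> x = x"
  shows "permutation_action (L \<times> R) (bimod_mult G) (case_prod act) A"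
proof -
  have "bij_betw (act l r) A A" if "l \<in> carrier G" "r \<in> carrier G" for l r
    by (rule bij_betw_byWitness[where f' = "act (inv l) (inv r)"])
      (use that closed in \<open>auto simp flip: compose simp: unit\<close>)
  then show ?thesis
    using assms(1,2) unfolding permutation_action_def bimod_mult_def by (auto intro: compose)
qed

lemma tensor_orbit_singleton: "g \<in> carrier G \<Longrightarrow> tensor_orbit G H [g] = {[g]}"
  unfolding tensor_orbit_def by (auto simp: length_Suc_conv)

lemma tensor_orbit_pair:
  assumes "H \<subseteq> carrier G" "a \<in> carrier G" "b \<in> carrier G"
  shows "tensor_orbit G H [a, b] = pair_orbit G H a b"
proof (intro Set.set_eqI iffI)
  fix ys assume "ys \<in> tensor_orbit G H [a, b]"
  then obtain hf where "length ys = 2" "hf 0 \<in> H"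
    "ys ! 0 = inv \<one> \<otimes> a \<otimes> hf 0" "ys ! 1 = inv (hf 0) \<otimes> b \<otimes> \<one>"
    unfolding tensor_orbit_def by (auto simp: less_2_cases_iff)
  with assms have "ys = [a \<otimes> hf 0, inv (hf 0) \<otimes> b]" "hf 0 \<in> H"
    by (auto simp: length_eq_2_iff)
  then show "ys \<in> pair_orbit G H a b" unfolding pair_orbit_def by auto
next
  fix ys assume "ys \<in> pair_orbit G H a b"
  then obtain h where "h \<in> H" "ys = [a \<otimes> h, inv h \<otimes> b]" unfolding pair_orbit_def by auto
  with assms show "ys \<in> tensor_orbit G H [a, b]"
    unfolding tensor_orbit_def by (auto intro!: exI[of _ "\<lambda>_. h"] simp: less_Suc_eq)
qed

lemma tensor_basis_one: "tensor_basis G H 1 = (\<lambda>g. {[g]}) ` carrier G"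
proof -
  have "{xs. length xs = 1 \<and> set xs \<subseteq> carrier G} = (\<lambda>g. [g]) ` carrier G"
    by (auto simp: length_Suc_conv)
  then show ?thesis unfolding tensor_basis_def by (auto simp: tensor_orbit_singleton image_iff)
qed

lemma tensor_basis_two:
  assumes "H \<subseteq> carrier G"
  shows "tensor_basis G H 2 = (\<lambda>(a, b). pair_orbit G H a b) ` (carrier G \<times> carrier G)"
proof -
  have "{xs. length xs = 2 \<and> set xs \<subseteq> carrier G} = (\<lambda>(a, b). [a, b]) ` (carrier G \<times> carrier G)"
    by (auto simp: length_eq_2_iff image_iff)
  then show ?thesis
    unfolding tensor_basis_def using assms by (force simp: tensor_orbit_pair image_iff)
qed

lemma tensor_act_singleton: "tensor_act G l r {[g]} = {[l \<otimes> g \<otimes> r]}"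
  by (simp add: tensor_act_def bimod_list_act_def)

lemma tensor_act_pair_orbit:
  assumes "H \<subseteq> carrier G" "l \<in> carrier G" "r \<in> carrier G" "a \<in> carrier G" "b \<in> carrier G"
  shows "tensor_act G l r (pair_orbit G H a b) = pair_orbit G H (l \<otimes> a) (b \<otimes> r)"
  using assms unfolding tensor_act_def pair_orbit_def image_image
  by (intro image_cong refl) (auto simp: bimod_list_act_def m_assoc subsetD)

lemma pair_orbit_eqD:
  assumes "subgroup H G" "c \<in> carrier G" "d \<in> carrier G" "pair_orbit G H a b = pair_orbit G H c d"
  shows "\<exists>h\<in>H. c = a \<otimes> h \<and> d = inv h \<otimes> b"
proof -
  have "[c \<otimes> \<one>, inv \<one> \<otimes> d] \<in> pair_orbit G H c d"
    unfolding pair_orbit_def using subgroup.one_closed[OF assms(1)] by blast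
  then have "[c, d] \<in> pair_orbit G H a b" using assms(2-4) by simp
  then show ?thesis unfolding pair_orbit_def by auto
qed

lemma permutation_action_tensor_basis_one:
  assumes "L \<subseteq> carrier G" "R \<subseteq> carrier G"
  shows "permutation_action (L \<times> R) (bimod_mult G) (case_prod (tensor_act G)) (tensor_basis G H 1)"
  unfolding tensor_basis_one using assms
  by (intro permutation_action_bimodule) (auto simp: tensor_act_singleton m_assoc)

lemma permutation_action_tensor_basis_two:
  assumes "subgroup H G" "L \<subseteq> carrier G" "R \<subseteq> carrier G"
  shows "permutation_action (L \<times> R) (bimod_mult G) (case_prod (tensor_act G)) (tensor_basis G H 2)"
proof (rule permutation_action_bimodule[OF assms(2,3)])
  have H: "H \<subseteq> carrier G" using assms(1) subgroup.subset by blast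
  show "tensor_act G l r C \<in> tensor_basis G H 2"
    if lr: "l \<in> carrier G" "r \<in> carrier G" and C: "C \<in> tensor_basis G H 2" for l r C
  proof -
    obtain a b where "a \<in> carrier G" "b \<in> carrier G" "C = pair_orbit G H a b"
      using C unfolding tensor_basis_two[OF H] by auto
    with lr H have "tensor_act G l r C = pair_orbit G H (l \<otimes> a) (b \<otimes> r)"
      by (simp add: tensor_act_pair_orbit)
    with lr \<open>a \<in> carrier G\<close> \<open>b \<in> carrier G\<close> show ?thesis
      unfolding tensor_basis_two[OF H] by (intro rev_image_eqI[of "(l \<otimes> a, b \<otimes> r)"]) auto
  qed
  show "tensor_act G (l \<otimes> l') (r' \<otimes> r) C = tensor_act G l r (tensor_act G l' r' C)"
    if "l \<in> carrier G" "l' \<in> carrier G" "r \<in> carrier G" "r' \<in> carrier G" "C \<in> tensor_basis G H 2"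
    for l l' r r' C
    using that H unfolding tensor_basis_two[OF H] by (auto simp: tensor_act_pair_orbit m_assoc)
  show "tensor_act G \<one> \<one> C = C" if "C \<in> tensor_basis G H 2" for C
    using that H unfolding tensor_basis_two[OF H] by (auto simp: tensor_act_pair_orbit)
qed

lemma finite_tensor_basis: "finite (carrier G) \<Longrightarrow> finite (tensor_basis G H m)"
  unfolding tensor_basis_def using finite_lists_length_eq[of "carrier G" m]
  by (simp add: conj_commute)

end

section \<open>The group G128 and its subgroup H8\<close>

lemma less_power_two_iff_high_bits_zero: "(x::nat) < 2 ^ m \<longleftrightarrow> (\<forall>n\<ge>m. \<not> bit x n)"
proof
  assume "x < 2 ^ m"
  then have "take_bit m x = x" by (simp add: take_bit_nat_eq_self_iff)
  then show "\<forall>n\<ge>m. \<not> bit x n" by (metis bit_take_bit_iff not_le)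
next
  assume "\<forall>n\<ge>m. \<not> bit x n"
  then have "take_bit m x = x" by (auto simp: bit_eq_iff bit_take_bit_iff not_le)
  then show "x < 2 ^ m" by (metis take_bit_nat_eq_self_iff)
qed

lemma xor_less_power_two: "(x::nat) < 2 ^ m \<Longrightarrow> y < 2 ^ m \<Longrightarrow> xor x y < 2 ^ m"
  by (simp add: less_power_two_iff_high_bits_zero bit_xor_iff)

lemma xor_less_8: "(x::nat) < 8 \<Longrightarrow> y < 8 \<Longrightarrow> xor x y < 8"
  using xor_less_power_two[of x 3 y] by simp

lemma xor_cancel_left [simp]: "xor x (xor x y) = (y::nat)"
  by (simp flip: xor.assoc)

lemma xor_eq_0_iff: "xor (x::nat) y = 0 \<longleftrightarrow> x = y"
proof
  assume "xor x y = 0"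
  then have "xor x (xor x y) = x" by simp
  then show "x = y" by simp
qed simp

lemma bit_if_8: "bit (if b then 8 else 0 :: nat) n \<longleftrightarrow> b \<and> n = 3"
  using bit_exp_iff[where 'a = nat, of 3 n] by simp

definition pairing :: "nat \<Rightarrow> nat \<Rightarrow> bool" where
  "pairing x y \<longleftrightarrow> (bit x 0 \<and> bit y 4) \<noteq> ((bit x 1 \<and> bit y 5) \<noteq> (bit x 2 \<and> bit y 6))"

definition g128_mult :: "nat \<Rightarrow> nat \<Rightarrow> nat" where
  "g128_mult x y = xor (xor x y) (if pairing x y then 8 else 0)"

definition g128_inv :: "nat \<Rightarrow> nat" where
  "g128_inv x = xor x (if pairing x x then 8 else 0)"

definition G128 :: "nat monoid" where
  "G128 = \<lparr>carrier = {..<128}, mult = g128_mult, one = 0\<rparr>"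

definition H8 :: "nat set" where
  "H8 = {..<8}"

lemma finite_H8 [simp]: "finite H8"
  by (simp add: H8_def)

lemma card_H8: "card H8 = 8"
  unfolding H8_def by simp

lemma xor_in_H8: "x \<in> H8 \<Longrightarrow> y \<in> H8 \<Longrightarrow> xor x y \<in> H8"
  unfolding H8_def by (simp add: xor_less_8)

lemma H8_eq_0_iff:
  assumes "h \<in> H8"
  shows "h = 0 \<longleftrightarrow> (\<forall>i<3. \<not> bit h i)"
proof
  assume low: "\<forall>i<3. \<not> bit h i"
  have "bit h n = bit 0 n" for n
    using low assms less_power_two_iff_high_bits_zero[of h 3]
    by (cases "n < 3") (auto simp: H8_def)
  then show "h = 0" by (rule bit_eqI)
qed simp

lemma G128_simps [simp]: "carrier G128 = {..<128}" "mult G128 = g128_mult" "one G128 = 0"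
  by (simp_all add: G128_def)

lemma bit_g128_mult: "bit (g128_mult x y) n \<longleftrightarrow> (bit x n \<noteq> bit y n) \<noteq> (n = 3 \<and> pairing x y)"
  unfolding g128_mult_def by (simp add: bit_xor_iff bit_if_8) blast

lemma bit_g128_inv: "bit (g128_inv x) n \<longleftrightarrow> bit x n \<noteq> (n = 3 \<and> pairing x x)"
  unfolding g128_inv_def by (simp add: bit_xor_iff bit_if_8) blast

lemma pairing_g128_mult_left: "pairing (g128_mult x y) z \<longleftrightarrow> pairing x z \<noteq> pairing y z"
  unfolding pairing_def by (simp add: bit_g128_mult) blast

lemma pairing_g128_mult_right: "pairing x (g128_mult y z) \<longleftrightarrow> pairing x y \<noteq> pairing x z"
  unfolding pairing_def by (simp add: bit_g128_mult) blast

lemma pairing_g128_inv_left: "pairing (g128_inv x) z = pairing x z"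
  unfolding pairing_def by (simp add: bit_g128_inv)

lemma pairing_g128_inv_right: "pairing z (g128_inv x) = pairing z x"
  unfolding pairing_def by (simp add: bit_g128_inv)

lemma pairing_xor_left: "pairing (xor x y) z \<longleftrightarrow> pairing x z \<noteq> pairing y z"
  unfolding pairing_def by (simp add: bit_xor_iff) blast

lemma not_pairing_if_less_16: "y < 16 \<Longrightarrow> \<not> pairing x y"
  unfolding pairing_def using less_power_two_iff_high_bits_zero[of y 4] by simp

lemma g128_mult_eq_xor: "y < 16 \<Longrightarrow> g128_mult x y = xor x y"
  unfolding g128_mult_def by (simp add: not_pairing_if_less_16)

lemma g128_mult_zero_left [simp]: "g128_mult 0 y = y"
  by (simp add: g128_mult_def pairing_def)

lemma g128_mult_zero_right [simp]: "g128_mult x 0 = x"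
  by (simp add: g128_mult_def pairing_def)

lemma g128_mult_assoc: "g128_mult (g128_mult x y) z = g128_mult x (g128_mult y z)"
  by (intro bit_eqI) (simp add: bit_g128_mult pairing_g128_mult_left pairing_g128_mult_right, blast)

lemma g128_mult_closed: "x < 128 \<Longrightarrow> y < 128 \<Longrightarrow> g128_mult x y < 128"
  using less_power_two_iff_high_bits_zero[of _ 7] by (simp add: bit_g128_mult)

lemma g128_inv_closed: "x < 128 \<Longrightarrow> g128_inv x < 128"
  using less_power_two_iff_high_bits_zero[of _ 7] by (simp add: bit_g128_inv)

lemma g128_mult_inv_left: "g128_mult (g128_inv x) x = 0"
  by (intro bit_eqI) (simp add: bit_g128_mult bit_g128_inv pairing_g128_inv_left, blast)

lemma group_G128: "group G128"
proof (rule groupI)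
  show "\<And>x. x \<in> carrier G128 \<Longrightarrow> \<exists>y\<in>carrier G128. y \<otimes>\<^bsub>G128\<^esub> x = \<one>\<^bsub>G128\<^esub>"
    using g128_inv_closed g128_mult_inv_left by auto
qed (simp_all add: g128_mult_closed g128_mult_assoc)

interpretation G128: group G128
  by (rule group_G128)

lemma inv_G128: "x \<in> carrier G128 \<Longrightarrow> inv\<^bsub>G128\<^esub> x = g128_inv x"
  using G128.inv_equality[of "g128_inv x" x] g128_mult_inv_left g128_inv_closed by simp

lemma g128_inv_eq_self: "x < 16 \<Longrightarrow> g128_inv x = x"
  unfolding g128_inv_def by (simp add: not_pairing_if_less_16)

lemma subgroup_H8: "subgroup H8 G128"
  by (rule subgroup.intro) (auto simp: H8_def g128_mult_eq_xor xor_less_8 inv_G128 g128_inv_eq_self)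

definition H8_conj :: "nat \<Rightarrow> nat \<Rightarrow> nat" where
  "H8_conj h g = xor h (if pairing h g then 8 else 0)"

lemma g128_conj_H8: "h < 8 \<Longrightarrow> g128_mult (g128_mult (g128_inv g) h) g = H8_conj h g"
  unfolding H8_conj_def using not_pairing_if_less_16[of h]
  by (intro bit_eqI)
    (simp add: bit_g128_mult bit_g128_inv pairing_g128_mult_left pairing_g128_inv_left
      bit_xor_iff bit_if_8, blast)

lemma g128_conj_H8_inverse: "h < 8 \<Longrightarrow> g128_mult (g128_mult g h) (g128_inv g) = H8_conj h g"
  unfolding H8_conj_def using not_pairing_if_less_16[of h]
  by (intro bit_eqI)
    (simp add: bit_g128_mult bit_g128_inv pairing_g128_mult_left pairing_g128_inv_right
      bit_xor_iff bit_if_8, blast)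

lemma conj_subgroup_H8: "g \<in> carrier G128 \<Longrightarrow> conj_subgroup G128 H8 g = (\<lambda>h. H8_conj h g) ` H8"
  unfolding conj_subgroup_def by (intro image_cong refl) (simp add: inv_G128 H8_def g128_conj_H8)

section \<open>Depth\<close>

lemma has_depth_1_iff:
  "has_depth G H 1 \<longleftrightarrow> is_summand_multiple (carrier G) (\<lambda>l r x. l \<otimes>\<^bsub>G\<^esub> x \<otimes>\<^bsub>G\<^esub> r)
                                   H (\<lambda>l r x. l \<otimes>\<^bsub>G\<^esub> x \<otimes>\<^bsub>G\<^esub> r) H H"
  unfolding has_depth_def by auto

lemma has_depth_2_iff:
  "has_depth G H 2 \<longleftrightarrow> is_summand_multiple (tensor_basis G H 2) (tensor_act G)
                                   (tensor_basis G H 1) (tensor_act G) (carrier G) H"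
  unfolding has_depth_def by (simp del: One_nat_def) simp

lemma has_depth_3_iff:
  "has_depth G H 3 \<longleftrightarrow> is_summand_multiple (tensor_basis G H 2) (tensor_act G)
                                   (tensor_basis G H 1) (tensor_act G) H H"
proof -
  have "(2::nat) * n \<noteq> 3" for n by presburger
  then show ?thesis unfolding has_depth_def by (simp del: One_nat_def) simp
qed

definition dot3 :: "nat \<Rightarrow> nat \<Rightarrow> bool" where
  "dot3 a h \<longleftrightarrow> (bit a 0 \<and> bit h 0) \<noteq> ((bit a 1 \<and> bit h 1) \<noteq> (bit a 2 \<and> bit h 2))"

definition char8 :: "nat \<Rightarrow> nat \<Rightarrow> real" where
  "char8 a h = (if dot3 a h then -1 else 1)"

definition H8_pair_char :: "nat \<times> nat \<Rightarrow> nat \<times> nat \<Rightarrow> real" where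
  "H8_pair_char c e = char8 (fst c) (fst e) * char8 (snd c) (snd e)"

lemma dot3_xor_left: "dot3 (xor a b) h \<longleftrightarrow> dot3 a h \<noteq> dot3 b h"
  unfolding dot3_def by (simp add: bit_xor_iff) blast

lemma dot3_xor_right: "dot3 a (xor h h') \<longleftrightarrow> dot3 a h \<noteq> dot3 a h'"
  unfolding dot3_def by (simp add: bit_xor_iff) blast

lemma char8_xor: "char8 a (xor h h') = char8 a h * char8 a h'"
  unfolding char8_def by (simp add: dot3_xor_right)

lemma char8_1_xor_1: "char8 1 (xor r 1) = - char8 1 r"
proof -
  have "char8 1 (1::nat) = -1" by (simp add: char8_def dot3_def bit_Suc_0_iff)
  then show ?thesis by (simp add: char8_xor)
qed

lemma sum_H8: "(\<Sum>a\<in>H8. F a) = F 0 + F 1 + F 2 + F 3 + F 4 + F 5 + F 6 + (F 7 :: 'a::comm_monoid_add)"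
proof -
  have "{..<8::nat} = {0, 1, 2, 3, 4, 5, 6, 7}" by auto
  then show ?thesis unfolding H8_def by (simp add: add.assoc)
qed

lemma pairing_16_mult: "pairing h (16 * g) \<longleftrightarrow> dot3 g h"
proof -
  have "bit (16 * g) n \<longleftrightarrow> 4 \<le> n \<and> bit g (n - 4)" for n
    using bit_push_bit_iff[of 4 g n] by (simp add: push_bit_eq_mult mult.commute)
  then show ?thesis unfolding pairing_def dot3_def by auto
qed

lemma dot3_power_two:
  assumes "i < 3"
  shows "dot3 (2 ^ i) h \<longleftrightarrow> bit h i"
proof -
  have "i = 0 \<or> i = 1 \<or> i = 2" using assms by auto
  then show ?thesis by (auto simp: dot3_def bit_exp_iff)
qed

lemma sum_char8:
  assumes "d \<in> H8"
  shows "(\<Sum>a\<in>H8. char8 a d) = (if d = 0 then 8 else 0)"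
proof (cases "d = 0")
  case True
  then show ?thesis by (simp add: char8_def dot3_def card_H8)
next
  case False
  have "\<exists>i<3. bit d i" using False H8_eq_0_iff[OF assms] by blast
  then obtain i where i: "i < 3" "bit d i" by blast
  have "(2::nat) ^ i \<in> H8"
    using i(1) power_strict_increasing[of i 3 "2::nat"] unfolding H8_def by simp
  then have "(\<Sum>a\<in>H8. char8 a d) = 0"
    using i by (intro sum_eq_0_if_sign_reversing_involution[where \<sigma> = "\<lambda>a. xor a (2 ^ i)"])
      (auto simp: xor_in_H8 char8_def dot3_xor_left dot3_power_two xor.assoc)
  then show ?thesis using False by simp
qed

lemma bimod_mult_H8:
  "e \<in> H8 \<times> H8 \<Longrightarrow> f \<in> H8 \<times> H8 \<Longrightarrow> bimod_mult G128 e f = (xor (fst e) (fst f), xor (snd f) (snd e))"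
  unfolding bimod_mult_def H8_def by (auto simp: g128_mult_eq_xor xor.commute)

lemma sign_character_H8_pair_char: "sign_character (H8 \<times> H8) (bimod_mult G128) (H8_pair_char c)"
  unfolding sign_character_def H8_pair_char_def
  by (auto simp: char8_def bimod_mult_H8 dot3_xor_right)

lemma H8_pair_char_orthogonal:
  assumes "e \<in> H8 \<times> H8" "e' \<in> H8 \<times> H8"
  shows "(\<Sum>c\<in>H8 \<times> H8. H8_pair_char c e * H8_pair_char c e')
       = (if e = e' then real (card (H8 \<times> H8)) else 0)"
proof -
  obtain l r l' r' where e: "e = (l, r)" "e' = (l', r')" using prod.exhaust by metis
  have "(\<Sum>c\<in>H8 \<times> H8. H8_pair_char c e * H8_pair_char c e')
      = (\<Sum>a\<in>H8. char8 a (xor l l')) * (\<Sum>b\<in>H8. char8 b (xor r r'))"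
    unfolding H8_pair_char_def e
    by (simp add: sum_product sum.cartesian_product case_prod_beta char8_xor mult_ac)
  also have "\<dots> = (if e = e' then real (card (H8 \<times> H8)) else 0)"
    using assms xor_in_H8 by (auto simp: e sum_char8 xor_eq_0_iff card_cartesian_product card_H8)
  finally show ?thesis .
qed

lemma stabiliser_G128:
  assumes "l < 8" "r < 8"
  shows "g128_mult (g128_mult l g) r = g \<longleftrightarrow> r = l \<and> \<not> pairing l g"
proof
  assume stable: "g128_mult (g128_mult l g) r = g"
  have bits: "((bit l n \<noteq> bit g n) \<noteq> (n = 3 \<and> pairing l g)) \<noteq> bit r n \<longleftrightarrow> bit g n" for n
    using stable[unfolded bit_eq_iff] assms(2) by (simp add: bit_g128_mult not_pairing_if_less_16)
  have "\<not> bit l 3" "\<not> bit r 3"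
    using assms less_power_two_iff_high_bits_zero[of _ 3] by auto
  then have "\<not> pairing l g" using bits[of 3] by auto
  moreover have "r = l" by (rule bit_eqI) (use bits calculation in auto)
  ultimately show "r = l \<and> \<not> pairing l g" by simp
next
  assume "r = l \<and> \<not> pairing l g"
  then show "g128_mult (g128_mult l g) r = g"
    using assms(2) by (intro bit_eqI) (auto simp: bit_g128_mult not_pairing_if_less_16)
qed

lemma H8_pair_char_realised:
  assumes "c \<in> H8 \<times> H8"
  shows "\<exists>y\<in>tensor_basis G128 H8 1. \<forall>e\<in>H8 \<times> H8.
           case_prod (tensor_act G128) e y = y \<longrightarrow> H8_pair_char c e = 1"
proof -
  obtain a b where c: "c = (a, b)" "a < 8" "b < 8" using assms unfolding H8_def by auto
  \<comment> \<open>The stabiliser of [g] is the diagonal over the kernel of pairing _ g.\<close>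
  define g where "g = 16 * xor a b"
  have "g < 128" using xor_less_8[OF c(2,3)] unfolding g_def by simp
  then have "{[g]} \<in> tensor_basis G128 H8 1" unfolding G128.tensor_basis_one by simp
  moreover have "H8_pair_char c (l, r) = 1"
    if "l < 8" "r < 8" "tensor_act G128 l r {[g]} = {[g]}" for l r
  proof -
    have "r = l" "\<not> pairing l g"
      using that stabiliser_G128 by (auto simp: G128.tensor_act_singleton)
    then show ?thesis
      unfolding g_def pairing_16_mult dot3_xor_left H8_pair_char_def c(1) char8_def by auto
  qed
  ultimately show ?thesis unfolding H8_def by auto
qed

lemma summand_depth_3:
  "is_summand_multiple (tensor_basis G128 H8 2) (tensor_act G128)
     (tensor_basis G128 H8 1) (tensor_act G128) H8 H8"
proof (rule is_summand_multiple_if_characters_realised[where m = "bimod_mult G128"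
      and \<epsilon> = "(0, 0)" and X = "H8 \<times> H8" and \<chi> = H8_pair_char])
  have H8: "H8 \<subseteq> carrier G128" unfolding H8_def by auto
  show "finite (tensor_basis G128 H8 2)" "finite (tensor_basis G128 H8 1)"
    by (simp_all add: G128.finite_tensor_basis)
  show "tensor_basis G128 H8 2 \<noteq> {}"
    using G128.tensor_basis_two[OF H8] by (auto simp: lessThan_empty_iff)
  show "finite (H8 \<times> H8)" "(0, 0) \<in> H8 \<times> H8" unfolding H8_def by auto
  then show "H8 \<times> H8 \<noteq> {}" by blast
  show "permutation_action (H8 \<times> H8) (bimod_mult G128) (case_prod (tensor_act G128))
      (tensor_basis G128 H8 2)"
    using G128.permutation_action_tensor_basis_two[OF subgroup_H8 H8 H8] .
  show "permutation_action (H8 \<times> H8) (bimod_mult G128) (case_prod (tensor_act G128))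
      (tensor_basis G128 H8 1)"
    using G128.permutation_action_tensor_basis_one[OF H8 H8] .
  show "\<forall>e\<in>H8 \<times> H8. bij_betw (bimod_mult G128 e) (H8 \<times> H8) (H8 \<times> H8)"
    using G128.bimod_mult_bij[OF subgroup_H8] by blast
  show "\<forall>y\<in>tensor_basis G128 H8 1. case_prod (tensor_act G128) (0, 0) y = y"
    unfolding G128.tensor_basis_one by (auto simp: G128.tensor_act_singleton g128_mult_eq_xor)
  show "\<forall>c\<in>H8 \<times> H8. sign_character (H8 \<times> H8) (bimod_mult G128) (H8_pair_char c)"
    using sign_character_H8_pair_char by blast
  show "\<forall>e\<in>H8 \<times> H8. \<forall>e'\<in>H8 \<times> H8. (\<Sum>c\<in>H8 \<times> H8. H8_pair_char c e * H8_pair_char c e')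
      = (if e = e' then real (card (H8 \<times> H8)) else 0)"
    using H8_pair_char_orthogonal by blast
  show "\<forall>c\<in>H8 \<times> H8. \<exists>y\<in>tensor_basis G128 H8 1. \<forall>e\<in>H8 \<times> H8.
      case_prod (tensor_act G128) e y = y \<longrightarrow> H8_pair_char c e = 1"
    using H8_pair_char_realised by blast
qed (simp add: H8_def)

lemma not_summand_depth_1:
  "\<not> is_summand_multiple (carrier G128) (\<lambda>l r x. l \<otimes>\<^bsub>G128\<^esub> x \<otimes>\<^bsub>G128\<^esub> r)
       H8 (\<lambda>l r x. l \<otimes>\<^bsub>G128\<^esub> x \<otimes>\<^bsub>G128\<^esub> r) H8 H8"
proof -
  define act where "act l r x = g128_mult (g128_mult l x) r" for l r x
  have act_H8: "act l r y = xor (xor l y) r" if "l \<in> H8" "r \<in> H8" "y \<in> H8" for l r y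
    using that xor_in_H8 unfolding act_def H8_def by (auto simp: g128_mult_eq_xor)
  have "1 \<in> H8" by (simp add: H8_def)
  \<comment> \<open>(l, r) and (l 1, r 1) act in the same way on the abelian group H8 but carry opposite
    signs, while the stabiliser of 16 in H8 \<times> H8 is the diagonal over the kernel of pairing _ 16.\<close>
  have "\<not> is_summand_multiple (carrier G128) act H8 act H8 H8"
  proof (rule not_is_summand_multiple_if_annihilator[where E = "H8 \<times> H8" and x\<^sub>0 = 16
        and f = "\<lambda>e. char8 1 (snd e)"])
    show "\<forall>e\<in>H8 \<times> H8. bij_betw (case_prod act e) H8 H8"
    proof
      fix e assume "e \<in> H8 \<times> H8"
      then show "bij_betw (case_prod act e) H8 H8"
        by (intro bij_betw_byWitness[where f' = "case_prod act e"])
          (auto simp: act_H8 xor_in_H8 xor.assoc xor.left_commute)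
    qed
    show "\<forall>y\<in>H8. \<forall>y'\<in>H8. (\<Sum>e\<in>H8 \<times> H8. if case_prod act e y = y'
        then char8 1 (snd e) else 0) = 0"
      using char8_1_xor_1 xor_in_H8[of _ 1] \<open>1 \<in> H8\<close>
      by (intro ballI sum_eq_0_if_sign_reversing_involution[where \<sigma> = "\<lambda>(l, r). (xor l 1, xor r 1)"])
        (auto simp: act_H8 xor.assoc xor.commute xor.left_commute)
    have "(\<Sum>e\<in>H8 \<times> H8. if case_prod act e 16 = 16 then char8 1 (snd e) else 0)
        = (\<Sum>l\<in>H8. \<Sum>r\<in>H8. if r = l \<and> \<not> pairing l 16 then char8 1 r else 0)"
      unfolding act_def sum.cartesian_product
      by (intro sum.cong refl) (auto simp: stabiliser_G128 H8_def)
    also have "\<dots> = (\<Sum>l\<in>H8. if \<not> pairing l 16 then char8 1 l else 0)"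
      by (intro sum.cong refl) (simp add: if_distrib cong: if_cong)
    also have "\<dots> = 4" unfolding sum_H8 by (simp add: pairing_def char8_def dot3_def bit_Suc_0_iff)
    finally show "(\<Sum>e\<in>H8 \<times> H8. if case_prod act e 16 = 16 then char8 1 (snd e) else 0) \<noteq> 0"
      by simp
  qed (auto simp: act_def H8_def g128_mult_closed)
  then show ?thesis unfolding act_def by simp
qed

text \<open>The subgroup generated by 1 \<in> H8 and z; it contains every conjugate of 1.\<close>
definition K4 :: "nat set" where
  "K4 = {0, 1, 8, 9}"

lemma g128_mult_inv_cancel_left: "g128_mult (g128_inv y) (g128_mult y z) = z"
  by (simp add: g128_mult_assoc[symmetric] g128_mult_inv_left)

lemma tensor_basis_one_annihilated:
  assumes "y \<in> tensor_basis G128 H8 1"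
  shows "(\<Sum>e\<in>K4 \<times> H8. if case_prod (tensor_act G128) e y = y' then char8 1 (snd e) else 0) = 0"
proof -
  obtain g where y: "y = {[g]}" "g < 128"
    using assms unfolding G128.tensor_basis_one by auto
  define c where "c = H8_conj 1 g"
  have c: "c \<in> {1, 9}" "c < 16" unfolding c_def H8_conj_def by auto
  have c_conj: "c = g128_mult (g128_mult g 1) (g128_inv g)"
    unfolding c_def using g128_conj_H8_inverse[of 1 g] by simp
  have shift: "g128_mult (g128_mult (g128_mult l c) g) (xor r 1) = g128_mult (g128_mult l g) r"
    if "r \<in> H8" for l r
  proof -
    have "xor r 1 < 16" "r < 16" using that xor_in_H8[of r 1] unfolding H8_def by auto
    then have "g128_mult 1 (xor r 1) = r" by (simp add: g128_mult_eq_xor xor.left_commute)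
    then show ?thesis unfolding c_conj by (simp add: g128_mult_assoc g128_mult_inv_cancel_left)
  qed
  \<comment> \<open>(l, r) and (l c, r 1) act in the same way on [g] but carry opposite signs.\<close>
  show ?thesis
  proof (rule sum_eq_0_if_sign_reversing_involution[where \<sigma> = "\<lambda>(l, r). (g128_mult l c, xor r 1)"])
    fix e assume "e \<in> K4 \<times> H8"
    then obtain l r where e: "e = (l, r)" "l \<in> K4" "r \<in> H8" by auto
    have "g128_mult l c \<in> K4" "xor r 1 \<in> H8"
      using e(2,3) c xor_in_H8[of r 1] unfolding K4_def H8_def by (auto simp: g128_mult_eq_xor)
    moreover have "g128_mult (g128_mult l c) c = l" "xor (xor r 1) 1 = r"
      using c(2) by (simp_all add: g128_mult_eq_xor xor.assoc)
    moreover have "char8 1 (xor r 1) = - char8 1 r" by (rule char8_1_xor_1)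
    ultimately show "(\<lambda>(l, r). (g128_mult l c, xor r 1)) e \<in> K4 \<times> H8"
      "(\<lambda>(l, r). (g128_mult l c, xor r 1)) ((\<lambda>(l, r). (g128_mult l c, xor r 1)) e) = e"
      "(\<lambda>e. if case_prod (tensor_act G128) e y = y' then char8 1 (snd e) else 0)
         ((\<lambda>(l, r). (g128_mult l c, xor r 1)) e)
       = - (if case_prod (tensor_act G128) e y = y' then char8 1 (snd e) else 0)"
      using shift[OF e(3)] by (auto simp: e(1) y(1) G128.tensor_act_singleton)
  qed
qed

lemma pair_orbit_stabiliser:
  assumes "l \<in> K4" "r \<in> H8"
  shows "tensor_act G128 l r (pair_orbit G128 H8 0 16) = pair_orbit G128 H8 0 16 \<longleftrightarrow> l = 0 \<and> r = 0"
proof -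
  have H8: "H8 \<subseteq> carrier G128" unfolding H8_def by auto
  have lr: "l \<in> carrier G128" "r \<in> carrier G128" using assms unfolding K4_def H8_def by auto
  have act: "tensor_act G128 l r (pair_orbit G128 H8 0 16) = pair_orbit G128 H8 l (g128_mult 16 r)"
    using G128.tensor_act_pair_orbit[OF H8 lr] by simp
  show ?thesis
  proof
    assume "tensor_act G128 l r (pair_orbit G128 H8 0 16) = pair_orbit G128 H8 0 16"
    then have "pair_orbit G128 H8 0 16 = pair_orbit G128 H8 l (g128_mult 16 r)" using act by simp
    moreover have "g128_mult 16 r \<in> carrier G128" using lr g128_mult_closed by simp
    ultimately obtain h where h: "h \<in> H8" "l = h" "g128_mult 16 r = g128_mult (inv\<^bsub>G128\<^esub> h) 16"
      using G128.pair_orbit_eqD[OF subgroup_H8 lr(1), of "g128_mult 16 r" 0 16] by auto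
    moreover have "inv\<^bsub>G128\<^esub> h = h"
      using h(1) H8 by (auto simp: inv_G128 g128_inv_eq_self H8_def)
    ultimately have l: "l \<in> {0, 1}" and "xor 16 r = g128_mult l 16"
      using assms by (auto simp: g128_mult_eq_xor K4_def H8_def)
    then have r: "r = xor 16 (g128_mult l 16)" by (metis xor_cancel_left)
    have "g128_mult 1 16 = 25" by (simp add: g128_mult_def pairing_def bit_Suc_0_iff)
    then have "l \<noteq> 1" using r assms(2) unfolding H8_def by auto
    then show "l = 0 \<and> r = 0" using l r by simp
  next
    assume "l = 0 \<and> r = 0"
    then show "tensor_act G128 l r (pair_orbit G128 H8 0 16) = pair_orbit G128 H8 0 16"
      using act by simp
  qed
qed

lemma not_summand_depth_2:
  "\<not> is_summand_multiple (tensor_basis G128 H8 2) (tensor_act G128)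
       (tensor_basis G128 H8 1) (tensor_act G128) (carrier G128) H8"
proof (rule not_is_summand_multiple_if_annihilator[where E = "K4 \<times> H8"
      and x\<^sub>0 = "pair_orbit G128 H8 0 16" and f = "\<lambda>e. char8 1 (snd e)"])
  have K4: "K4 \<subseteq> carrier G128" and H8: "H8 \<subseteq> carrier G128" unfolding K4_def H8_def by auto
  have act_two: "permutation_action (K4 \<times> H8) (bimod_mult G128) (case_prod (tensor_act G128))
      (tensor_basis G128 H8 2)"
    by (rule G128.permutation_action_tensor_basis_two[OF subgroup_H8 K4 H8])
  show "finite (K4 \<times> H8)" "K4 \<times> H8 \<subseteq> carrier G128 \<times> H8" "finite (tensor_basis G128 H8 1)"
    using K4 by (auto simp: K4_def G128.finite_tensor_basis)
  show "\<forall>e\<in>K4 \<times> H8. bij_betw (case_prod (tensor_act G128) e) (tensor_basis G128 H8 1) (tensor_basis G128 H8 1)"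
    using G128.permutation_action_tensor_basis_one[OF K4 H8] unfolding permutation_action_def by blast
  show "\<forall>y\<in>tensor_basis G128 H8 1. \<forall>y'\<in>tensor_basis G128 H8 1.
      (\<Sum>e\<in>K4 \<times> H8. if case_prod (tensor_act G128) e y = y' then char8 1 (snd e) else 0) = 0"
    using tensor_basis_one_annihilated by blast
  show x0: "pair_orbit G128 H8 0 16 \<in> tensor_basis G128 H8 2"
    unfolding G128.tensor_basis_two[OF H8] by (rule image_eqI[where x = "(0, 16)"]) auto
  show "\<forall>e\<in>K4 \<times> H8. case_prod (tensor_act G128) e (pair_orbit G128 H8 0 16) \<in> tensor_basis G128 H8 2"
    using act_two x0 unfolding permutation_action_def bij_betw_def by blast
  have "(\<Sum>e\<in>K4 \<times> H8. if case_prod (tensor_act G128) e (pair_orbit G128 H8 0 16) = pair_orbit G128 H8 0 16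
        then char8 1 (snd e) else 0) = (\<Sum>e\<in>K4 \<times> H8. if e = (0, 0) then char8 1 (snd e) else 0)"
  proof (intro sum.cong refl)
    fix e assume "e \<in> K4 \<times> H8"
    then obtain l r where "e = (l, r)" "l \<in> K4" "r \<in> H8" by auto
    then show "(if case_prod (tensor_act G128) e (pair_orbit G128 H8 0 16) = pair_orbit G128 H8 0 16
        then char8 1 (snd e) else 0) = (if e = (0, 0) then char8 1 (snd e) else 0)"
      by (simp add: pair_orbit_stabiliser)
  qed
  also have "\<dots> = 1" by (simp add: K4_def H8_def char8_def dot3_def)
  finally show "(\<Sum>e\<in>K4 \<times> H8. if case_prod (tensor_act G128) e (pair_orbit G128 H8 0 16) = pair_orbit G128 H8 0 16
        then char8 1 (snd e) else 0) \<noteq> 0" by simp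
qed

lemma depth_G128_H8: "depth G128 H8 = 3"
  unfolding depth_def
proof (rule Least_equality)
  show "1 \<le> (3::nat) \<and> has_depth G128 H8 3"
    using summand_depth_3 by (simp add: has_depth_3_iff)
  have "\<not> has_depth G128 H8 1" "\<not> has_depth G128 H8 2"
    using not_summand_depth_1 not_summand_depth_2 has_depth_1_iff has_depth_2_iff by blast+
  show "3 \<le> d" if "1 \<le> d \<and> has_depth G128 H8 d" for d
  proof (rule ccontr)
    assume "\<not> 3 \<le> d"
    with that have "d = 1 \<or> d = 2" by auto
    with that \<open>\<not> has_depth G128 H8 1\<close> \<open>\<not> has_depth G128 H8 2\<close> show False by blast
  qed
qed

section \<open>Base size\<close>

lemma pairing_H8_conj: "pairing (H8_conj h g) g' \<longleftrightarrow> pairing h g'"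
  unfolding H8_conj_def pairing_xor_left by (simp add: pairing_def bit_if_8)

lemma H8_conj_in_H8_iff: "h \<in> H8 \<Longrightarrow> H8_conj h g \<in> H8 \<longleftrightarrow> \<not> pairing h g"
  using less_power_two_iff_high_bits_zero[of _ 3]
  by (auto simp: H8_def H8_conj_def bit_xor_iff bit_if_8)

lemma H8_conj_eq_0_iff:
  assumes "h \<in> H8"
  shows "H8_conj h g = 0 \<longleftrightarrow> h = 0"
proof
  assume "H8_conj h g = 0"
  then have "bit h n = bit 0 n" for n
    using assms less_power_two_iff_high_bits_zero[of h 3]
    by (cases "n = 3") (auto simp: H8_def H8_conj_def bit_eq_iff bit_xor_iff bit_if_8)
  then show "h = 0" by (rule bit_eqI)
qed (simp add: H8_conj_def pairing_def)

lemma H8_inter_conj_subgroup: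
  "g \<in> carrier G128 \<Longrightarrow> H8 \<inter> conj_subgroup G128 H8 g = {h \<in> H8. \<not> pairing h g}"
  by (auto simp: conj_subgroup_H8 H8_conj_in_H8_iff pairing_H8_conj)
    (auto simp: H8_conj_def intro!: image_eqI)

lemma conj_subgroup_0: "conj_subgroup G128 H8 0 = H8"
  by (simp add: conj_subgroup_H8 H8_conj_def pairing_def)

lemma ex_H8_equal_pairings: "\<exists>h\<in>H8. h \<noteq> 0 \<and> pairing h y = pairing h x \<and> pairing h z = pairing h x"
proof -
  define F where "F h = (pairing h x \<noteq> pairing h y, pairing h x \<noteq> pairing h z)" for h
  have "\<not> inj_on F H8"
  proof
    assume "inj_on F H8"
    then have "card H8 \<le> card (UNIV :: (bool \<times> bool) set)" by (rule card_inj_on_le) auto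
    then show False by (simp add: card_H8 card_UNIV_bool flip: UNIV_Times_UNIV)
  qed
  then obtain h1 h2 where "h1 \<in> H8" "h2 \<in> H8" "h1 \<noteq> h2" "F h1 = F h2"
    unfolding inj_on_def by blast
  then show ?thesis
    by (intro bexI[of _ "xor h1 h2"]) (auto simp: F_def pairing_xor_left xor_eq_0_iff xor_in_H8)
qed

lemma three_conjugates_meet:
  assumes "a \<in> carrier G128" "b \<in> carrier G128" "c \<in> carrier G128"
  shows "\<exists>t. t \<noteq> 0 \<and> t \<in> conj_subgroup G128 H8 a \<inter> conj_subgroup G128 H8 b \<inter> conj_subgroup G128 H8 c"
proof -
  obtain h where h: "h \<in> H8" "h \<noteq> 0" "pairing h b = pairing h a" "pairing h c = pairing h a"
    using ex_H8_equal_pairings by blast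
  then have "H8_conj h b = H8_conj h a" "H8_conj h c = H8_conj h a" by (simp_all add: H8_conj_def)
  then have "H8_conj h a \<in> conj_subgroup G128 H8 a \<inter> conj_subgroup G128 H8 b \<inter> conj_subgroup G128 H8 c"
    using assms h(1) unfolding conj_subgroup_H8[OF assms(1)] conj_subgroup_H8[OF assms(2)]
      conj_subgroup_H8[OF assms(3)] by (metis IntI image_eqI)
  then show ?thesis using h(1,2) H8_conj_eq_0_iff by blast
qed

lemma pairing_16_power_two: "i < 3 \<Longrightarrow> pairing h (16 * 2 ^ i) \<longleftrightarrow> bit h i"
  by (simp add: pairing_16_mult dot3_power_two)

lemma inter_conj_subgroups_eq_1: "(\<Inter>x\<in>{0, 16, 32, 64}. conj_subgroup G128 H8 x) = {0}"
proof -
  have "(\<Inter>x\<in>{0, 16, 32, 64}. conj_subgroup G128 H8 x)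
      = (H8 \<inter> conj_subgroup G128 H8 16) \<inter> (H8 \<inter> conj_subgroup G128 H8 32) \<inter> (H8 \<inter> conj_subgroup G128 H8 64)"
    using conj_subgroup_0 by auto
  also have "\<dots> = {h \<in> H8. \<forall>i<3. \<not> pairing h (16 * 2 ^ i)}"
    by (auto simp: H8_inter_conj_subgroup less_Suc_eq numeral_3_eq_3)
  also have "\<dots> = {0}"
    using H8_eq_0_iff pairing_16_power_two by (auto simp: H8_def)
  finally show ?thesis .
qed

lemma set_eq_if_length_le_3:
  assumes "xs \<noteq> []" "length xs \<le> 3"
  shows "\<exists>a b c. set xs = {a, b, c}"
proof -
  have "0 < length xs" using assms(1) by simp
  then have "length xs = 1 \<or> length xs = 2 \<or> length xs = 3" using assms(2) by linarith
  then have "set xs = {hd xs, hd (tl xs @ xs), last xs}"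
    by (auto simp: length_Suc_conv numeral_3_eq_3 numeral_2_eq_2)
  then show ?thesis by blast
qed

lemma base_size_G128_H8: "base_size G128 H8 = 4"
  unfolding base_size_def
proof (rule Least_equality)
  show "\<exists>xs. length xs = 4 \<and> set xs \<subseteq> carrier G128 \<and>
      (\<Inter>x\<in>set xs. conj_subgroup G128 H8 x) = {\<one>\<^bsub>G128\<^esub>}"
    using inter_conj_subgroups_eq_1 by (intro exI[of _ "[0, 16, 32, 64]"]) simp
  show "4 \<le> b" if "\<exists>xs. length xs = b \<and> set xs \<subseteq> carrier G128 \<and>
      (\<Inter>x\<in>set xs. conj_subgroup G128 H8 x) = {\<one>\<^bsub>G128\<^esub>}" for b
  proof (rule ccontr)
    assume "\<not> 4 \<le> b"
    from that obtain xs where xs: "length xs = b" "set xs \<subseteq> carrier G128"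
      "(\<Inter>x\<in>set xs. conj_subgroup G128 H8 x) = {0}" by auto
    then have "xs \<noteq> []" by auto
    then obtain a b c where abc: "set xs = {a, b, c}"
      using set_eq_if_length_le_3 xs(1) \<open>\<not> 4 \<le> b\<close> by fastforce
    then obtain t where "t \<noteq> 0" "t \<in> (\<Inter>x\<in>set xs. conj_subgroup G128 H8 x)"
      using three_conjugates_meet[of a b c] xs(2) by auto
    with xs(3) show False by simp
  qed
qed

lemma core_free_G128_H8: "core_free G128 H8"
proof -
  have "0 \<in> conj_subgroup G128 H8 g" if "g \<in> carrier G128" for g
  proof -
    have "(0::nat) \<in> H8" by (simp add: H8_def)
    then have "H8_conj 0 g \<in> conj_subgroup G128 H8 g" using that by (simp add: conj_subgroup_H8)
    then show ?thesis using H8_conj_eq_0_iff \<open>0 \<in> H8\<close> by metis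
  qed
  moreover have "(\<Inter>g\<in>carrier G128. conj_subgroup G128 H8 g) \<subseteq> (\<Inter>x\<in>{0, 16, 32, 64}. conj_subgroup G128 H8 x)"
    by (intro INT_anti_mono) auto
  ultimately show ?thesis unfolding core_free_def inter_conj_subgroups_eq_1 by auto
qed

lemma H8_inter_two_conjugates_nontrivial:
  assumes "x \<in> carrier G128" "y \<in> carrier G128"
  shows "H8 \<inter> conj_subgroup G128 H8 x \<inter> conj_subgroup G128 H8 y \<noteq> {\<one>\<^bsub>G128\<^esub>}"
proof
  assume trivial: "H8 \<inter> conj_subgroup G128 H8 x \<inter> conj_subgroup G128 H8 y = {\<one>\<^bsub>G128\<^esub>}"
  obtain t where "t \<noteq> 0" "t \<in> conj_subgroup G128 H8 0 \<inter> conj_subgroup G128 H8 x \<inter> conj_subgroup G128 H8 y"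
    using three_conjugates_meet[of 0 x y] assms by auto
  with trivial show False by (simp add: conj_subgroup_0)
qed

lemma elementary_abelian_2_H8: "elementary_abelian_2 G128 H8"
  unfolding elementary_abelian_2_def H8_def by (auto simp: g128_mult_eq_xor xor.commute)

theorem mainTheorem16:
  shows "\<exists>(G :: nat monoid) H.
     group G \<and> finite (carrier G) \<and> card (carrier G) = 2 ^ 7 \<and>
     subgroup H G \<and> elementary_abelian_2 G H \<and> card H = 8 \<and> core_free G H \<and>
     depth G H = 3 \<and> base_size G H = 4 \<and>
     \<not> (\<exists>x\<in>carrier G. \<exists>y\<in>carrier G.
          H \<inter> conj_subgroup G H x \<inter> conj_subgroup G H y = {\<one>\<^bsub>G\<^esub>})"
  using group_G128 subgroup_H8 elementary_abelian_2_H8 card_H8 core_free_G128_H8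
    depth_G128_H8 base_size_G128_H8 H8_inter_two_conjugates_nontrivial
  by (intro exI[of _ G128] exI[of _ H8]) simp

end
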